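(* Let $\mathcal{O}=(O_1,\ldots,O_n)$ be a chain with $n\ge 2$, and let $\mathcal{O}_{1,n-1}=(O_1,\ldots,O_{n-1})$. Then $\Phi_{\mathcal{O}}\le\Phi_{\mathcal{O}_{1,n-1}}$, where for a chain $\mathcal{Q}=(O_1,\ldots,O_m)$, $\Phi_{\mathcal{Q}}=\varphi(r_m-r_1)-\frac{\varphi}{3}\sum_{i=2}^m(2H_i+V_i)$ with $\varphi=\frac{3}{\sqrt5}(1-1.8/1.998)$.
   Context: All objects lie in the Euclidean plane; a "circle" means a closed disk. Chain. A sequence of distinct finite closed disks $(O_1,\ldots,O_n)$ is a chain if: (1) every two consecutive disks $O_i,O_{i+1}$ intersect; let $a_i,b_i$ be the common points of their boundary circles ($a_i=b_i$ if tangent), labelled so that all the $a_i$ lie on one side of the chain and all the $b_i$ on the other. Let $C_i^{(i+1)}$ be the arc of the boundary of $O_i$ lying in $O_{i+1}$ and $C_{i+1}^{(i)}$ the arc of the boundary of $O_{i+1}$ lying in $O_i$. (2) For $2\le i\le n-1$, the arcs $C_i^{(i-1)}$ and $C_i^{(i+1)}$ share no point other than a boundary point. $r_i$ is the radius and $o_i$ the center of $O_i$. For $2\le i\le n$, choose coordinates in which $o_{i-1},o_i$ lie on a horizontal line and $a_{i-1}$ is on or above that line. Let $q_{i-1}^{\rightarrow}$ (resp. $q_i^{\leftarrow}$) be the point of the upper boundary of $O_{i-1}$ (resp. $O_i$) farthest from the line $o_{i-1}o_i$. Let $Q_{i-1}^{\rightarrow}$ be the upper arc of the boundary of $O_{i-1}$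 between $q_{i-1}^{\rightarrow}$ and $a_{i-1}$, and $Q_i^{\leftarrow}$ the upper arc of the boundary of $O_i$ between $q_i^{\leftarrow}$ and $a_{i-1}$. $Q_{i-1}^{\rightarrow}$ is colored red if it lies inside $O_i$ and green otherwise; $Q_i^{\leftarrow}$ is red if it lies inside $O_{i-1}$ and green otherwise. Let $\mathcal{P}_i$ be the path from $q_{i-1}^{\rightarrow}$ to $q_i^{\leftarrow}$ formed by $Q_{i-1}^{\rightarrow}$ and $Q_i^{\leftarrow}$. $H_i$ (resp. $V_i$) is the horizontal (resp. vertical) distance traveled along $\mathcal{P}_i$, green arcs contributing positively and red arcs negatively. *)

theory Defs
  imports "HOL-Analysis.Analysis"
begin

text \<open>A chain of n disks is given by
  centres c i, radii r i (i = 1..n) and the labelled common boundary points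
  a i, b i of the consecutive disks O_i, O_(i+1) (i = 1..n-1).\<close>

definition cross2 :: "complex \<Rightarrow> complex \<Rightarrow> real" where
  "cross2 u v = Im (cnj u * v)"

definition arcC :: "(nat \<Rightarrow> complex) \<Rightarrow> (nat \<Rightarrow> real) \<Rightarrow> nat \<Rightarrow> nat \<Rightarrow> complex set" where
  "arcC c r i j = sphere (c i) (r i) \<inter> cball (c j) (r j)"

definition is_chain ::
  "nat \<Rightarrow> (nat \<Rightarrow> complex) \<Rightarrow> (nat \<Rightarrow> real) \<Rightarrow> (nat \<Rightarrow> complex) \<Rightarrow> (nat \<Rightarrow> complex) \<Rightarrow> bool" where
  "is_chain n c r a b \<longleftrightarrow>
     1 \<le> n \<and>
     (\<forall>i\<in>{1..n}. 0 < r i) \<and>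
     (\<forall>i\<in>{1..n}. \<forall>j\<in>{1..n}. i \<noteq> j \<longrightarrow> cball (c i) (r i) \<noteq> cball (c j) (r j)) \<and>
     (\<forall>i. 1 \<le> i \<and> i < n \<longrightarrow> sphere (c i) (r i) \<inter> sphere (c (Suc i)) (r (Suc i)) = {a i, b i}) \<and>
     ((\<forall>i. 1 \<le> i \<and> i < n \<longrightarrow> cross2 (c (Suc i) - c i) (a i - c i) \<ge> 0) \<or>
      (\<forall>i. 1 \<le> i \<and> i < n \<longrightarrow> cross2 (c (Suc i) - c i) (a i - c i) \<le> 0)) \<and>
     (\<forall>i. 2 \<le> i \<and> i + 1 \<le> n \<longrightarrow>
        arcC c r i (i - 1) \<inter> arcC c r i (Suc i) \<subseteq> {a (i - 1), b (i - 1), a i, b i})"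

text \<open>Coordinates for the pair (O_(i-1), O_i): horizontal unit vector u from o_(i-1)
  towards o_i, upward unit normal nv chosen so that a_(i-1) is on or above the line.\<close>
definition hdir :: "(nat \<Rightarrow> complex) \<Rightarrow> nat \<Rightarrow> complex" where
  "hdir c i = (c i - c (i - 1)) / of_real (cmod (c i - c (i - 1)))"

definition vdir :: "(nat \<Rightarrow> complex) \<Rightarrow> (nat \<Rightarrow> complex) \<Rightarrow> nat \<Rightarrow> complex" where
  "vdir c a i = (if cross2 (hdir c i) (a (i - 1) - c (i - 1)) \<ge> 0
                 then \<i> * hdir c i else - (\<i> * hdir c i))"

text \<open>The upper arc of the circle (centre o, radius \<rho>) between its topmost point
  o + \<rho> nv and the point p (p on the upper half).\<close>
definition upper_arc :: "complex \<Rightarrow> real \<Rightarrow> complex \<Rightarrow> complex \<Rightarrow> complex \<Rightarrow> complex set" where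
  "upper_arc ctr \<rho> u nv p = {z. cmod (z - ctr) = \<rho> \<and> nv \<bullet> (z - ctr) \<ge> 0 \<and>
      min (u \<bullet> (p - ctr)) 0 \<le> u \<bullet> (z - ctr) \<and> u \<bullet> (z - ctr) \<le> max (u \<bullet> (p - ctr)) 0}"

definition Qright :: "(nat \<Rightarrow> complex) \<Rightarrow> (nat \<Rightarrow> real) \<Rightarrow> (nat \<Rightarrow> complex) \<Rightarrow> nat \<Rightarrow> complex set" where
  "Qright c r a i = upper_arc (c (i - 1)) (r (i - 1)) (hdir c i) (vdir c a i) (a (i - 1))"

definition Qleft :: "(nat \<Rightarrow> complex) \<Rightarrow> (nat \<Rightarrow> real) \<Rightarrow> (nat \<Rightarrow> complex) \<Rightarrow> nat \<Rightarrow> complex set" where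
  "Qleft c r a i = upper_arc (c i) (r i) (hdir c i) (vdir c a i) (a (i - 1))"

text \<open>Colour signs: red (inside the other disk) gives -1, green gives +1.\<close>
definition sgn_right :: "(nat \<Rightarrow> complex) \<Rightarrow> (nat \<Rightarrow> real) \<Rightarrow> (nat \<Rightarrow> complex) \<Rightarrow> nat \<Rightarrow> real" where
  "sgn_right c r a i = (if Qright c r a i \<subseteq> cball (c i) (r i) then -1 else 1)"

definition sgn_left :: "(nat \<Rightarrow> complex) \<Rightarrow> (nat \<Rightarrow> real) \<Rightarrow> (nat \<Rightarrow> complex) \<Rightarrow> nat \<Rightarrow> real" where
  "sgn_left c r a i = (if Qleft c r a i \<subseteq> cball (c (i - 1)) (r (i - 1)) then -1 else 1)"

definition q_right :: "(nat \<Rightarrow> complex) \<Rightarrow> (nat \<Rightarrow> real) \<Rightarrow> (nat \<Rightarrow> complex) \<Rightarrow> nat \<Rightarrow> complex" where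
  "q_right c r a i = c (i - 1) + of_real (r (i - 1)) * vdir c a i"

definition q_left :: "(nat \<Rightarrow> complex) \<Rightarrow> (nat \<Rightarrow> real) \<Rightarrow> (nat \<Rightarrow> complex) \<Rightarrow> nat \<Rightarrow> complex" where
  "q_left c r a i = c i + of_real (r i) * vdir c a i"

text \<open>Each arc is monotone in both coordinates, so the horizontal (vertical) distance
  travelled along it is the horizontal (vertical) distance between its endpoints.\<close>
definition Hval :: "(nat \<Rightarrow> complex) \<Rightarrow> (nat \<Rightarrow> real) \<Rightarrow> (nat \<Rightarrow> complex) \<Rightarrow> nat \<Rightarrow> real" where
  "Hval c r a i =
     sgn_right c r a i * \<bar>hdir c i \<bullet> (q_right c r a i - a (i - 1))\<bar> +
     sgn_left c r a i * \<bar>hdir c i \<bullet> (q_left c r a i - a (i - 1))\<bar>"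

definition Vval :: "(nat \<Rightarrow> complex) \<Rightarrow> (nat \<Rightarrow> real) \<Rightarrow> (nat \<Rightarrow> complex) \<Rightarrow> nat \<Rightarrow> real" where
  "Vval c r a i =
     sgn_right c r a i * \<bar>vdir c a i \<bullet> (q_right c r a i - a (i - 1))\<bar> +
     sgn_left c r a i * \<bar>vdir c a i \<bullet> (q_left c r a i - a (i - 1))\<bar>"

definition phi_const :: real where
  "phi_const = 3 / sqrt 5 * (1 - 1.8 / 1.998)"

definition Phi :: "(nat \<Rightarrow> complex) \<Rightarrow> (nat \<Rightarrow> real) \<Rightarrow> (nat \<Rightarrow> complex) \<Rightarrow> nat \<Rightarrow> real" where
  "Phi c r a m = phi_const * (r m - r 1)
      - phi_const / 3 * (\<Sum>i = 2..m. 2 * Hval c r a i + Vval c r a i)"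

end

theory Submission
  imports Defs
begin

text \<open>Put o_(n-1) at the origin and o_n at (d, 0), so that a_(n-1) = (x, y) with y \<ge> 0.
  Along the path P_n the horizontal distances are |x| and |d - x|, the vertical ones R - y
  and r - y, where R = r_(n-1), r = r_n. A red arc forces its topmost point into the other
  disk, i.e. R^2 + d^2 \<le> r^2 (resp. d^2 + r^2 \<le> R^2); in particular the two arcs are never both
  red. In each of the remaining three colourings, 2H_n + V_n \<ge> 3 (r_n - r_(n-1)) follows from
  the triangle inequality r \<le> R + d and from |d - x|^2 - |x|^2 = r^2 - R^2. Since \<phi> > 0, this
  is exactly Phi_O \<le> Phi_O_(1,n-1).\<close>

lemma two_circles_path_bound:
  fixes x y d R r sR sL :: real
  assumes on_first: "x\<^sup>2 + y\<^sup>2 = R\<^sup>2" and on_second: "(d - x)\<^sup>2 + y\<^sup>2 = r\<^sup>2"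
    and "y \<ge> 0" "R > 0" "r > 0" "d > 0"
    and sR: "sR = 1 \<or> sR = -1" and sL: "sL = 1 \<or> sL = -1"
    and red_right: "sR = -1 \<Longrightarrow> R\<^sup>2 + d\<^sup>2 \<le> r\<^sup>2"
    and red_left: "sL = -1 \<Longrightarrow> d\<^sup>2 + r\<^sup>2 \<le> R\<^sup>2"
  shows "3 * (r - R) \<le> 2 * (sR * \<bar>-x\<bar> + sL * \<bar>d - x\<bar>) + (sR * \<bar>R - y\<bar> + sL * \<bar>r - y\<bar>)"
proof -
  define A where "A = \<bar>d - x\<bar>"
  define B where "B = \<bar>x\<bar>"
  have "A\<^sup>2 \<le> r\<^sup>2" "B\<^sup>2 \<le> R\<^sup>2" "y\<^sup>2 \<le> R\<^sup>2" "y\<^sup>2 \<le> r\<^sup>2"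
    unfolding A_def B_def power2_abs
    using on_first on_second zero_le_power2[of x] zero_le_power2[of "d - x"] zero_le_power2[of y]
    by linarith+
  then have "A \<le> r" "B \<le> R" "y \<le> R" "y \<le> r"
    using assms(4,5) by (auto intro: power2_le_imp_le)
  have A_B: "A\<^sup>2 - B\<^sup>2 = r\<^sup>2 - R\<^sup>2"
    using on_first on_second by (simp add: A_def B_def power2_abs)
  have abs_eqs: "\<bar>R - y\<bar> = R - y" "\<bar>r - y\<bar> = r - y" "\<bar>-x\<bar> = B"
    using \<open>y \<le> R\<close> \<open>y \<le> r\<close> by (auto simp: B_def)
  have "d \<le> A + B"
    unfolding A_def B_def by linarith
  have "r \<le> R + d"
  proof (rule power2_le_imp_le)
    have "r\<^sup>2 = d\<^sup>2 - 2 * d * x + R\<^sup>2"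
      using on_first on_second by (simp add: power2_eq_square algebra_simps)
    also have "\<dots> \<le> d\<^sup>2 + 2 * d * R + R\<^sup>2"
      using mult_left_mono[of "- x" R d] \<open>B \<le> R\<close> \<open>d > 0\<close> unfolding B_def by argo
    also have "\<dots> = (R + d)\<^sup>2"
      by (simp add: power2_eq_square algebra_simps)
    finally show "r\<^sup>2 \<le> (R + d)\<^sup>2" .
  qed (use assms(4,6) in simp)
  have not_both_red: "\<not> (sR = -1 \<and> sL = -1)"
    using red_right red_left \<open>d > 0\<close> by (smt (verit) zero_less_power)
  consider "sR = 1" "sL = 1" | "sR = -1" "sL = 1" | "sR = 1" "sL = -1"
    using sR sL not_both_red by blast
  then show ?thesis
  proof cases
    case 1
    then show ?thesis
      using abs_eqs \<open>d \<le> A + B\<close> \<open>r \<le> R + d\<close> \<open>y \<le> R\<close> by (simp add: A_def)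
  next
    case 2
    then have "R\<^sup>2 \<le> r\<^sup>2"
      using red_right zero_le_power2[of d] by linarith
    then have "R \<le> r"
      using assms(5) by (auto intro: power2_le_imp_le)
    have "(r - R) * (A + B) \<le> (r - R) * (r + R)"
      using \<open>R \<le> r\<close> \<open>A \<le> r\<close> \<open>B \<le> R\<close> by (simp add: mult_left_mono)
    also have "\<dots> = (A - B) * (A + B)"
      using A_B by (simp add: power2_eq_square algebra_simps)
    finally have "r - R \<le> A - B"
      using \<open>d \<le> A + B\<close> \<open>d > 0\<close> by (simp add: mult_le_cancel_right)
    then show ?thesis
      using 2 abs_eqs by (simp add: A_def)
  next
    case 3
    then have "r\<^sup>2 \<le> R\<^sup>2"
      using red_left zero_le_power2[of d] by linarith
    then have "r \<le> R" "A \<le> B"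
      using A_B assms(4) by (auto simp: B_def intro: power2_le_imp_le)
    then show ?thesis
      using 3 abs_eqs by (simp add: A_def)
  qed
qed

lemma norm_power2_orthonormal_frame:
  fixes u v z :: complex
  assumes "cmod u = 1" and "v = \<i> * u \<or> v = - (\<i> * u)"
  shows "(cmod z)\<^sup>2 = (u \<bullet> z)\<^sup>2 + (v \<bullet> z)\<^sup>2"
proof -
  have "(u \<bullet> z)\<^sup>2 + (v \<bullet> z)\<^sup>2 = (Re u ^ 2 + Im u ^ 2) * (Re z ^ 2 + Im z ^ 2)"
    using assms(2) by (auto simp: inner_complex_def power2_eq_square algebra_simps)
  then show ?thesis
    using assms(1) by (simp add: cmod_power2 flip: cmod_power2)
qed

text \<open>The link (O_k, O_(k+1)), i.e. index i = k + 1 of H_i and V_i; contact_x, contact_y and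
  center_dist are the coordinates x, y, d of the header, in the frame (hdir, vdir).\<close>

locale chain_link =
  fixes c :: "nat \<Rightarrow> complex" and r :: "nat \<Rightarrow> real" and a :: "nat \<Rightarrow> complex" and k :: nat
  assumes radii_pos: "0 < r k" "0 < r (Suc k)"
    and contact_on_spheres: "a k \<in> sphere (c k) (r k)" "a k \<in> sphere (c (Suc k)) (r (Suc k))"
    and disks_distinct: "cball (c k) (r k) \<noteq> cball (c (Suc k)) (r (Suc k))"
begin

abbreviation "u \<equiv> hdir c (Suc k)"
abbreviation "v \<equiv> vdir c a (Suc k)"

definition center_dist :: real where
  "center_dist = cmod (c (Suc k) - c k)"

definition contact_x :: real where
  "contact_x = u \<bullet> (a k - c k)"

definition contact_y :: real where
  "contact_y = v \<bullet> (a k - c k)"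

lemma center_dist_pos: "0 < center_dist"
proof -
  have "c (Suc k) \<noteq> c k"
    using contact_on_spheres disks_distinct by auto
  then show ?thesis
    by (simp add: center_dist_def)
qed

lemma norm_hdir: "cmod u = 1"
  using center_dist_pos by (simp add: hdir_def norm_divide center_dist_def)

lemma center_diff_eq: "c (Suc k) - c k = of_real center_dist * u"
  using center_dist_pos by (simp add: hdir_def center_dist_def)

lemma vdir_cases: "v = \<i> * u \<or> v = - (\<i> * u)"
  by (simp add: vdir_def)

lemma frame_inner:
  "u \<bullet> u = 1" "v \<bullet> v = 1" "u \<bullet> v = 0" "v \<bullet> u = 0"
  "u \<bullet> (c (Suc k) - c k) = center_dist" "v \<bullet> (c (Suc k) - c k) = 0"
proof -
  show "u \<bullet> u = 1" "v \<bullet> v = 1"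
    using norm_hdir vdir_cases by (auto simp: dot_square_norm norm_mult)
  show "u \<bullet> v = 0" "v \<bullet> u = 0"
    using vdir_cases by (auto simp: inner_complex_def algebra_simps)
  then show "u \<bullet> (c (Suc k) - c k) = center_dist" "v \<bullet> (c (Suc k) - c k) = 0"
    using \<open>u \<bullet> u = 1\<close> by (simp_all add: center_diff_eq inner_mult_right)
qed

lemma norm_power2_frame: "(cmod z)\<^sup>2 = (u \<bullet> z)\<^sup>2 + (v \<bullet> z)\<^sup>2"
  using norm_power2_orthonormal_frame[OF norm_hdir vdir_cases] .

lemma contact_y_nonneg: "0 \<le> contact_y"
  using vdir_cases
  by (auto simp: contact_y_def vdir_def cross2_def inner_complex_def algebra_simps)

lemma contact_on_first_circle: "contact_x\<^sup>2 + contact_y\<^sup>2 = (r k)\<^sup>2"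
  using contact_on_spheres(1) norm_power2_frame[of "a k - c k"]
  by (simp add: contact_x_def contact_y_def dist_norm norm_minus_commute)

lemma contact_on_second_circle: "(center_dist - contact_x)\<^sup>2 + contact_y\<^sup>2 = (r (Suc k))\<^sup>2"
proof -
  have "(r (Suc k))\<^sup>2 = (cmod ((a k - c k) - (c (Suc k) - c k)))\<^sup>2"
    using contact_on_spheres(2) by (simp add: dist_norm norm_minus_commute)
  also have "\<dots> = (u \<bullet> ((a k - c k) - (c (Suc k) - c k)))\<^sup>2 + (v \<bullet> ((a k - c k) - (c (Suc k) - c k)))\<^sup>2"
    by (rule norm_power2_frame)
  also have "\<dots> = (contact_x - center_dist)\<^sup>2 + contact_y\<^sup>2"
    by (simp only: inner_diff_right[of _ "a k - c k"] frame_inner contact_x_def contact_y_def diff_zero)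
  finally show ?thesis
    by (simp add: power2_commute)
qed

lemma norm_vdir: "cmod v = 1"
  using norm_hdir vdir_cases by (auto simp: norm_mult)

lemma q_right_diff_contact: "q_right c r a (Suc k) - a k = of_real (r k) * v - (a k - c k)"
  by (simp add: q_right_def)

lemma q_left_diff_contact:
  "q_left c r a (Suc k) - a k = (c (Suc k) - c k) + of_real (r (Suc k)) * v - (a k - c k)"
  by (simp add: q_left_def)

lemma q_right_frame_coords:
  "u \<bullet> (q_right c r a (Suc k) - a k) = - contact_x"
  "v \<bullet> (q_right c r a (Suc k) - a k) = r k - contact_y"
  unfolding q_right_diff_contact contact_x_def contact_y_def
  by (simp_all only: inner_diff_right[of _ _ "a k - c k"] inner_mult_right frame_inner)

lemma q_left_frame_coords:
  "u \<bullet> (q_left c r a (Suc k) - a k) = center_dist - contact_x"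
  "v \<bullet> (q_left c r a (Suc k) - a k) = r (Suc k) - contact_y"
  unfolding q_left_diff_contact contact_x_def contact_y_def
  by (simp_all only: inner_diff_right[of _ _ "a k - c k"] inner_add_right inner_mult_right
      frame_inner)

lemma Hval_eq:
  "Hval c r a (Suc k) = sgn_right c r a (Suc k) * \<bar>- contact_x\<bar>
     + sgn_left c r a (Suc k) * \<bar>center_dist - contact_x\<bar>"
  by (simp add: Hval_def q_right_frame_coords q_left_frame_coords)

lemma Vval_eq:
  "Vval c r a (Suc k) = sgn_right c r a (Suc k) * \<bar>r k - contact_y\<bar>
     + sgn_left c r a (Suc k) * \<bar>r (Suc k) - contact_y\<bar>"
  by (simp add: Vval_def q_right_frame_coords q_left_frame_coords)

lemma red_right_bound:
  assumes "sgn_right c r a (Suc k) = -1"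
  shows "(r k)\<^sup>2 + center_dist\<^sup>2 \<le> (r (Suc k))\<^sup>2"
proof -
  define z where "z = of_real (r k) * v - (c (Suc k) - c k)"
  have "q_right c r a (Suc k) \<in> Qright c r a (Suc k)"
    using radii_pos norm_vdir
    by (simp add: Qright_def upper_arc_def q_right_def norm_mult inner_mult_right frame_inner)
  then have "q_right c r a (Suc k) \<in> cball (c (Suc k)) (r (Suc k))"
    using assms by (auto simp: sgn_right_def split: if_splits)
  moreover have "q_right c r a (Suc k) - c (Suc k) = z"
    by (simp add: z_def q_right_def)
  ultimately have "cmod z \<le> r (Suc k)"
    by (metis mem_cball dist_commute dist_norm)
  then have "(cmod z)\<^sup>2 \<le> (r (Suc k))\<^sup>2"
    by (simp add: power_mono)
  moreover have "(cmod z)\<^sup>2 = center_dist\<^sup>2 + (r k)\<^sup>2"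
    unfolding norm_power2_frame[of z] unfolding z_def
    by (simp only: inner_diff_right[of _ _ "c (Suc k) - c k"] inner_mult_right frame_inner) simp
  ultimately show ?thesis
    by simp
qed

lemma red_left_bound:
  assumes "sgn_left c r a (Suc k) = -1"
  shows "center_dist\<^sup>2 + (r (Suc k))\<^sup>2 \<le> (r k)\<^sup>2"
proof -
  define z where "z = (c (Suc k) - c k) + of_real (r (Suc k)) * v"
  have "q_left c r a (Suc k) \<in> Qleft c r a (Suc k)"
    using radii_pos norm_vdir
    by (simp add: Qleft_def upper_arc_def q_left_def norm_mult inner_mult_right frame_inner)
  then have "q_left c r a (Suc k) \<in> cball (c k) (r k)"
    using assms by (auto simp: sgn_left_def split: if_splits)
  moreover have "q_left c r a (Suc k) - c k = z"
    by (simp add: z_def q_left_def)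
  ultimately have "cmod z \<le> r k"
    by (metis mem_cball dist_commute dist_norm)
  then have "(cmod z)\<^sup>2 \<le> (r k)\<^sup>2"
    by (simp add: power_mono)
  moreover have "(cmod z)\<^sup>2 = center_dist\<^sup>2 + (r (Suc k))\<^sup>2"
    unfolding norm_power2_frame[of z] unfolding z_def
    by (simp only: inner_add_right inner_mult_right frame_inner) simp
  ultimately show ?thesis
    by simp
qed

lemma link_path_bound: "3 * (r (Suc k) - r k) \<le> 2 * Hval c r a (Suc k) + Vval c r a (Suc k)"
  unfolding Hval_eq Vval_eq
  by (rule two_circles_path_bound[OF contact_on_first_circle contact_on_second_circle
        contact_y_nonneg radii_pos center_dist_pos _ _ red_right_bound red_left_bound])
    (simp_all add: sgn_right_def sgn_left_def)

end

lemma chain_link_of_chain: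
  assumes "is_chain n c r a b" and "1 \<le> k" and "Suc k \<le> n"
  shows "chain_link c r a k"
proof -
  have "a k \<in> sphere (c k) (r k) \<inter> sphere (c (Suc k)) (r (Suc k))"
    using assms by (auto simp: is_chain_def)
  moreover have "0 < r k" "0 < r (Suc k)" "cball (c k) (r k) \<noteq> cball (c (Suc k)) (r (Suc k))"
    using assms unfolding is_chain_def by (auto dest: bspec)
  ultimately show ?thesis
    by unfold_locales simp_all
qed

lemma Phi_Suc:
  assumes "1 \<le> m"
  shows "Phi c r a (Suc m) = Phi c r a m + phi_const * (r (Suc m) - r m)
    - phi_const / 3 * (2 * Hval c r a (Suc m) + Vval c r a (Suc m))"
  using assms by (simp add: Phi_def sum.cl_ivl_Suc algebra_simps)

theorem proposition1:
  fixes n :: nat and c :: "nat \<Rightarrow> complex" and r :: "nat \<Rightarrow> real"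
    and a b :: "nat \<Rightarrow> complex"
  assumes "is_chain n c r a b" and "2 \<le> n"
  shows "Phi c r a n \<le> Phi c r a (n - 1)"
proof -
  obtain m where n: "n = Suc m" and "1 \<le> m"
    using assms(2) by (cases n) auto
  then interpret chain_link c r a m
    using chain_link_of_chain[OF assms(1)] by simp
  have "0 < phi_const"
    by (simp add: phi_const_def)
  then have "phi_const * (3 * (r (Suc m) - r m))
      \<le> phi_const * (2 * Hval c r a (Suc m) + Vval c r a (Suc m))"
    using link_path_bound by (intro mult_left_mono) auto
  then have "phi_const * (r (Suc m) - r m)
      \<le> phi_const / 3 * (2 * Hval c r a (Suc m) + Vval c r a (Suc m))"
    by (simp add: algebra_simps)
  then show ?thesis
    using Phi_Suc[OF \<open>1 \<le> m\<close>, of c r a] n by simp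
qed

end
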